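(* A ring $R$ is strongly nil-clean if, and only if, $R$ is GWNC and $R$ is a UU ring.
   Context: All rings are associative with identity. For a ring $S$, $U(S)$, ${\rm Nil}(S)$, ${\rm Id}(S)$ denote units, nilpotents, idempotents. $S$ is GWNC if every $a\in S\setminus U(S)$ can be written as $a=q+e$ or $a=q-e$ with $q\in{\rm Nil}(S)$, $e\in{\rm Id}(S)$. $R$ is strongly nil-clean if every element is $e+b$ with $e$ idempotent, $b$ nilpotent and $eb=be$. $R$ is UU if $U(R)\subseteq 1+{\rm Nil}(R)$. *)

theory Defs
  imports Main
begin

definition is_unit_r :: "'a::ring_1 \<Rightarrow> bool" where
  "is_unit_r a \<longleftrightarrow> (\<exists>b. a * b = 1 \<and> b * a = 1)"

definition nilpotent_r :: "'a::ring_1 \<Rightarrow> bool" where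
  "nilpotent_r a \<longleftrightarrow> (\<exists>n::nat. a ^ n = 0)"

definition idempotent_r :: "'a::ring_1 \<Rightarrow> bool" where
  "idempotent_r e \<longleftrightarrow> e * e = e"

definition GWNC :: "'a::ring_1 itself \<Rightarrow> bool" where
  "GWNC _ \<longleftrightarrow> (\<forall>a::'a. \<not> is_unit_r a \<longrightarrow>
      (\<exists>q e. nilpotent_r q \<and> idempotent_r e \<and> (a = q + e \<or> a = q - e)))"

definition strongly_nil_clean :: "'a::ring_1 itself \<Rightarrow> bool" where
  "strongly_nil_clean _ \<longleftrightarrow> (\<forall>a::'a. \<exists>e b. idempotent_r e \<and> nilpotent_r b \<and>
      a = e + b \<and> e * b = b * e)"

definition UU_ring :: "'a::ring_1 itself \<Rightarrow> bool" where
  "UU_ring _ \<longleftrightarrow> (\<forall>u::'a. is_unit_r u \<longrightarrow> nilpotent_r (u - 1))"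

end

theory Submission
  imports Defs
begin

(* In a UU ring, 1 + x is a unit exactly when x is nilpotent.  Hence the set J (nil_radical) of all j with
   r j nilpotent for every r is an ideal (it is the Jacobson radical), and 2 is nilpotent.
   Products of two square-zero elements are nilpotent, which puts every corner e r (1 - e)
   of an idempotent e into J; so modulo J idempotents are central and 2 = 0.  A GWNC
   decomposition a = q - e can then be rewritten as e + (q - 2 e), making every element nil-clean,
   and for a = e + q we get a - a^2 = q - q^2 modulo J, so a - a^2 is nilpotent.  Newton's
   iteration x \<mapsto> 3 x^2 - 2 x^3, run inside the bicommutant of a, then lifts a modulo the
   nilpotent a - a^2 to an idempotent commuting with a.
   Conversely, if a unit u = e + b is strongly nil-clean, then e = u (1 - u\<inverse> b) is an invertible
   idempotent, so e = 1 and u - 1 = b is nilpotent. *)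

lemma power_Suc_mult_swap: "(y * x) ^ Suc n = y * (x * y) ^ n * (x :: 'a::monoid_mult)"
  by (induction n) (simp_all add: mult.assoc)

lemma power_mult_commuting:
  assumes "a * b = b * a"
  shows "(a * b) ^ n = a ^ n * (b ^ n :: 'a::monoid_mult)"
proof (induction n)
  case (Suc n)
  have "(a * b) ^ Suc n = a * (b * a ^ n) * b ^ n" using Suc by (simp add: mult.assoc)
  also have "\<dots> = a * (a ^ n * b) * b ^ n" by (simp add: power_commuting_commutes[OF assms])
  finally show ?case by (simp add: mult.assoc)
qed simp

lemma one_diff_mult_geometric_sum: "(1 - x) * (\<Sum>i<n. x ^ i) = 1 - (x :: 'a::ring_1) ^ n"
proof (induction n)
  case (Suc n)
  have "(1 - x) * (\<Sum>i<Suc n. x ^ i) = (1 - x) * (\<Sum>i<n. x ^ i) + (x ^ n - x * x ^ n)"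
    by (simp add: distrib_left left_diff_distrib)
  then show ?case using Suc by simp
qed simp

lemma geometric_sum_mult_one_diff: "(\<Sum>i<n. x ^ i) * (1 - x) = 1 - (x :: 'a::ring_1) ^ n"
proof (induction n)
  case (Suc n)
  have "(\<Sum>i<Suc n. x ^ i) * (1 - x) = (\<Sum>i<n. x ^ i) * (1 - x) + (x ^ n - x ^ n * x)"
    by (simp add: distrib_right right_diff_distrib)
  then show ?case using Suc by (simp add: power_commutes)
qed simp

lemma nilpotent_r_mult_swap: "nilpotent_r (x * y) \<Longrightarrow> nilpotent_r (y * (x :: 'a::ring_1))"
  unfolding nilpotent_r_def by (metis power_Suc_mult_swap mult_zero_left mult_zero_right)

lemma nilpotent_r_mult_commuting:
  "a * b = b * a \<Longrightarrow> nilpotent_r a \<Longrightarrow> nilpotent_r (a * (b :: 'a::ring_1))"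
  unfolding nilpotent_r_def by (metis power_mult_commuting mult_zero_left)

lemma nilpotent_r_uminus: "nilpotent_r x \<Longrightarrow> nilpotent_r (- (x :: 'a::ring_1))"
  using nilpotent_r_mult_commuting[of x "- 1"] by simp

lemma nilpotent_r_of_power: "nilpotent_r (x ^ m) \<Longrightarrow> nilpotent_r (x :: 'a::ring_1)"
  unfolding nilpotent_r_def by (metis power_mult)

lemma is_unit_r_one_minus_nilpotent:
  assumes "nilpotent_r (x :: 'a::ring_1)"
  shows "is_unit_r (1 - x)"
proof -
  obtain n where "x ^ n = 0" using assms unfolding nilpotent_r_def by blast
  then show ?thesis unfolding is_unit_r_def
    using one_diff_mult_geometric_sum[of x n] geometric_sum_mult_one_diff[of x n] by auto
qed

lemma is_unit_r_one_plus_nilpotent: "nilpotent_r x \<Longrightarrow> is_unit_r (1 + (x :: 'a::ring_1))"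
  using is_unit_r_one_minus_nilpotent[OF nilpotent_r_uminus] by fastforce

lemma is_unit_r_mult: "is_unit_r a \<Longrightarrow> is_unit_r b \<Longrightarrow> is_unit_r (a * (b :: 'a::ring_1))"
  unfolding is_unit_r_def by (metis mult.assoc mult_1_left)

lemma unit_inverse_commute:
  assumes "a * w = 1" "w * a = 1" "a * z = z * (a :: 'a::ring_1)"
  shows "w * z = z * w"
proof -
  have "w * z = w * z * (a * w)" using assms by simp
  also have "\<dots> = w * (z * a) * w" by (simp only: mult.assoc)
  also have "\<dots> = w * (a * z) * w" by (simp only: assms(3))
  also have "\<dots> = (w * a) * (z * w)" by (simp only: mult.assoc)
  also have "\<dots> = z * w" using assms(2) by simp
  finally show ?thesis .
qed

lemma idempotent_unit_eq_one:
  assumes "idempotent_r e" "is_unit_r (e :: 'a::ring_1)"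
  shows "e = 1"
proof -
  obtain g where "e * g = 1" using assms unfolding is_unit_r_def by blast
  then have "e = e * e * g" by (simp add: mult.assoc)
  then show ?thesis using assms \<open>e * g = 1\<close> unfolding idempotent_r_def by simp
qed

lemma GWNC_if_strongly_nil_clean:
  "strongly_nil_clean TYPE('a::ring_1) \<Longrightarrow> GWNC TYPE('a)"
  unfolding strongly_nil_clean_def GWNC_def by (metis add.commute)

lemma UU_ring_if_strongly_nil_clean:
  assumes "strongly_nil_clean TYPE('a::ring_1)"
  shows "UU_ring TYPE('a)"
  unfolding UU_ring_def
proof (intro allI impI)
  fix u :: 'a
  assume "is_unit_r u"
  then obtain v where v: "u * v = 1" "v * u = 1" unfolding is_unit_r_def by blast
  obtain e b where eb: "idempotent_r e" "nilpotent_r b" "u = e + b" "e * b = b * e"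
    using assms unfolding strongly_nil_clean_def by blast
  have "u * b = b * u" using eb by (simp add: distrib_left distrib_right)
  then have "v * b = b * v" using unit_inverse_commute[OF v] by blast
  then have "nilpotent_r (v * b)" using nilpotent_r_mult_commuting[of b v] eb by simp
  then have "is_unit_r (u * (1 - v * b))"
    using is_unit_r_mult[OF \<open>is_unit_r u\<close> is_unit_r_one_minus_nilpotent] by blast
  moreover have "u * (1 - v * b) = e" using eb v by (simp add: right_diff_distrib flip: mult.assoc)
  ultimately have "e = 1" using idempotent_unit_eq_one eb by blast
  then show "nilpotent_r (u - 1)" using eb by simp
qed

lemma nilpotent_r_if_unit_one_plus:
  "UU_ring TYPE('a::ring_1) \<Longrightarrow> is_unit_r (1 + x) \<Longrightarrow> nilpotent_r (x :: 'a)"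
  unfolding UU_ring_def by fastforce

lemma nilpotent_two_if_UU_ring:
  assumes "UU_ring TYPE('a::ring_1)"
  shows "nilpotent_r (2 :: 'a)"
proof -
  have "is_unit_r (1 + (- 2) :: 'a)" unfolding is_unit_r_def by (intro exI[of _ "- 1"]) simp
  then show ?thesis using nilpotent_r_uminus nilpotent_r_if_unit_one_plus[OF assms] by fastforce
qed

lemma square_zero_mult_nilpotent:
  assumes UU: "UU_ring TYPE('a::ring_1)" and x: "x * x = 0" and y: "y * y = (0 :: 'a)"
  shows "nilpotent_r (x * y)"
proof -
  have x': "x * (x * r) = 0" and y': "y * (y * r) = 0" for r
    using x y by (simp_all flip: mult.assoc)
  define z where "z = x + y + x * y"
  define d where "d = x * y + y * x"
  have "nilpotent_r x" "nilpotent_r y"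
    using x y unfolding nilpotent_r_def by (metis power2_eq_square)+
  then have "is_unit_r ((1 + x) * (1 + y))" by (intro is_unit_r_mult is_unit_r_one_plus_nilpotent)
  moreover have "(1 + x) * (1 + y) = 1 + z" unfolding z_def by (simp add: algebra_simps)
  ultimately have unit: "is_unit_r (1 + z)" by simp
  then have "nilpotent_r z" using nilpotent_r_if_unit_one_plus[OF UU] by blast
  from unit obtain w where w: "(1 + z) * w = 1" "w * (1 + z) = 1" unfolding is_unit_r_def by blast
  have "w * z = z * w" using unit_inverse_commute[OF w] by (simp add: algebra_simps)
  have zz: "z * z = d * (1 + z)" unfolding z_def d_def by (simp add: algebra_simps x y x' y')
  have "d = d * ((1 + z) * w)" using w by simp
  also have "\<dots> = z * z * w" using zz by (simp add: mult.assoc)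
  finally have d_eq: "d = z * z * w" .
  have "nilpotent_r (z * z)" using nilpotent_r_mult_commuting \<open>nilpotent_r z\<close> by blast
  moreover have "z * z * w = w * (z * z)" using \<open>w * z = z * w\<close> by (metis mult.assoc)
  ultimately have "nilpotent_r d" unfolding d_eq using nilpotent_r_mult_commuting by blast
  then obtain n where "d ^ n = 0" unfolding nilpotent_r_def by blast
  \<comment> \<open>Since y y = 0, x y d = (x y)^2, so powers of x y are x y times powers of d.\<close>
  have "(x * y) ^ Suc k = x * y * d ^ k" for k
  proof (induction k)
    case (Suc k)
    have "x * y * d ^ Suc k = x * y * d ^ k * d" by (simp add: power_commutes mult.assoc)
    also have "\<dots> = (x * y) ^ Suc k * d" using Suc by simp
    also have "\<dots> = (x * y) ^ k * (x * y * d)" by (simp only: power_Suc2 mult.assoc)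
    also have "x * y * d = (x * y) * (x * y)" unfolding d_def by (simp add: algebra_simps y')
    finally show ?case by (simp only: power_Suc2 mult.assoc)
  qed simp
  then have "(x * y) ^ Suc n = 0" using \<open>d ^ n = 0\<close> by simp
  then show ?thesis unfolding nilpotent_r_def by blast
qed

definition nil_radical :: "'a::ring_1 set" where
  "nil_radical = {j. \<forall>r. nilpotent_r (r * j)}"

lemma zero_in_nil_radical: "0 \<in> nil_radical"
  unfolding nil_radical_def nilpotent_r_def by (auto intro: exI[of _ 1])

lemma nil_radical_nilpotent: "j \<in> nil_radical \<Longrightarrow> nilpotent_r j"
  unfolding nil_radical_def by (metis mem_Collect_eq mult_1_left)

lemma nil_radical_uminus: "j \<in> nil_radical \<Longrightarrow> - j \<in> nil_radical"
  unfolding nil_radical_def by (simp add: nilpotent_r_uminus)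

lemma nil_radical_mult_left: "j \<in> nil_radical \<Longrightarrow> s * j \<in> nil_radical"
  unfolding nil_radical_def by (simp flip: mult.assoc)

lemma nil_radical_mult_right: "j \<in> nil_radical \<Longrightarrow> j * s \<in> nil_radical"
  unfolding nil_radical_def
proof (intro CollectI allI)
  fix r
  assume "j \<in> {j. \<forall>r. nilpotent_r (r * j)}"
  then have "nilpotent_r (s * (r * j))" by (simp flip: mult.assoc)
  from nilpotent_r_mult_swap[OF this] show "nilpotent_r (r * (j * s))" by (simp add: mult.assoc)
qed

lemma nil_radical_add:
  assumes UU: "UU_ring TYPE('a::ring_1)" and "j1 \<in> nil_radical" "j2 \<in> (nil_radical :: 'a set)"
  shows "j1 + j2 \<in> nil_radical"
  unfolding nil_radical_def
proof (intro CollectI allI)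
  fix r :: 'a
  have unit1: "is_unit_r (1 + r * j1)"
    using assms is_unit_r_one_plus_nilpotent unfolding nil_radical_def by blast
  then obtain v where v: "(1 + r * j1) * v = 1" unfolding is_unit_r_def by blast
  have "is_unit_r ((1 + r * j1) * (1 + v * r * j2))"
    using assms unit1 is_unit_r_mult is_unit_r_one_plus_nilpotent unfolding nil_radical_def by blast
  moreover have "(1 + r * j1) * (1 + v * r * j2) = 1 + r * (j1 + j2)"
  proof -
    have "(1 + r * j1) * (1 + v * r * j2) = 1 + r * j1 + ((1 + r * j1) * v) * (r * j2)"
      by (simp add: algebra_simps)
    then show ?thesis using v by (simp add: distrib_left)
  qed
  ultimately show "nilpotent_r (r * (j1 + j2))" using nilpotent_r_if_unit_one_plus[OF UU] by simp
qed

lemma nil_radical_diff: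
  "UU_ring TYPE('a::ring_1) \<Longrightarrow> j1 \<in> nil_radical \<Longrightarrow> j2 \<in> (nil_radical :: 'a set) \<Longrightarrow>
    j1 - j2 \<in> nil_radical"
  using nil_radical_add[of j1 "- j2"] nil_radical_uminus[of j2] by simp

lemma power_diff_in_nil_radical:
  assumes UU: "UU_ring TYPE('a::ring_1)" and xy: "x - y \<in> (nil_radical :: 'a set)"
  shows "x ^ n - y ^ n \<in> nil_radical"
proof (induction n)
  case (Suc n)
  have "x ^ Suc n - y ^ Suc n = x * (x ^ n - y ^ n) + (x - y) * y ^ n"
    by (simp add: algebra_simps)
  then show ?case
    using Suc xy by (metis nil_radical_add[OF UU] nil_radical_mult_left nil_radical_mult_right)
qed (simp add: zero_in_nil_radical)

lemma nilpotent_r_if_diff_in_nil_radical: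
  assumes UU: "UU_ring TYPE('a::ring_1)" and "x - y \<in> (nil_radical :: 'a set)" "nilpotent_r y"
  shows "nilpotent_r x"
proof -
  obtain n where "y ^ n = 0" using assms unfolding nilpotent_r_def by blast
  then have "x ^ n \<in> nil_radical" using power_diff_in_nil_radical[OF assms(1,2), of n] by simp
  then show ?thesis using nil_radical_nilpotent nilpotent_r_of_power by blast
qed

lemma two_mult_in_nil_radical:
  assumes UU: "UU_ring TYPE('a::ring_1)"
  shows "2 * (x :: 'a) \<in> nil_radical"
  unfolding nil_radical_def
proof (intro CollectI allI)
  fix r :: 'a
  have "r * (2 * x) = 2 * (r * x)" by (metis mult.assoc mult_of_nat_commute of_nat_numeral)
  moreover have "2 * (r * x) = (r * x) * 2" by (metis mult_of_nat_commute of_nat_numeral)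
  ultimately show "nilpotent_r (r * (2 * x))"
    using nilpotent_r_mult_commuting nilpotent_two_if_UU_ring[OF UU] by metis
qed

lemma idempotent_corner_in_nil_radical:
  assumes UU: "UU_ring TYPE('a::ring_1)" and e: "idempotent_r (e :: 'a)"
  shows "e * r * (1 - e) \<in> nil_radical"
  unfolding nil_radical_def
proof (intro CollectI allI)
  fix s :: 'a
  have ee: "e * (e * z) = e * z" for z using e unfolding idempotent_r_def by (simp flip: mult.assoc)
  have ef: "e * ((1 - e) * z) = 0" and fe: "(1 - e) * (e * z) = 0"
    and ff: "(1 - e) * ((1 - e) * z) = (1 - e) * z" for z
    using ee by (simp_all add: algebra_simps)
  define x where "x = e * r * (1 - e)"
  define y where "y = (1 - e) * s * e"
  have "x * x = 0" "y * y = 0" unfolding x_def y_def by (simp_all add: mult.assoc ef fe)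
  \<comment> \<open>As x = x (1 - e), x s is nilpotent iff (1 - e) s x = y x is.\<close>
  then have "nilpotent_r (y * x)"
    using square_zero_mult_nilpotent[OF UU] nilpotent_r_mult_swap by blast
  moreover have "y * x = ((1 - e) * s) * x" unfolding x_def y_def by (simp add: mult.assoc ee)
  moreover have "x * ((1 - e) * s) = x * s" unfolding x_def by (simp add: mult.assoc ff)
  ultimately have "nilpotent_r (x * s)" using nilpotent_r_mult_swap by metis
  then show "nilpotent_r (s * (e * r * (1 - e)))" using nilpotent_r_mult_swap unfolding x_def by blast
qed

lemma idempotent_commutator_in_nil_radical:
  assumes UU: "UU_ring TYPE('a::ring_1)" and e: "idempotent_r (e :: 'a)"
  shows "e * r - r * e \<in> nil_radical"
proof -
  have "idempotent_r (1 - e)" using e unfolding idempotent_r_def by (simp add: algebra_simps)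
  moreover have "e * r - r * e = e * r * (1 - e) - (1 - e) * r * (1 - (1 - e))"
    by (simp add: algebra_simps)
  ultimately show ?thesis
    using nil_radical_diff[OF UU] idempotent_corner_in_nil_radical[OF UU] e by metis
qed

lemma nil_clean_if_GWNC_UU_ring:
  assumes UU: "UU_ring TYPE('a::ring_1)" and "GWNC TYPE('a)"
  obtains e q where "idempotent_r e" "nilpotent_r q" "a = e + (q :: 'a)"
proof (cases "is_unit_r a")
  case True
  then show ?thesis
    using that[of 1 "a - 1"] UU unfolding UU_ring_def idempotent_r_def by simp
next
  case False
  then obtain q e where qe: "nilpotent_r q" "idempotent_r e" "a = q + e \<or> a = q - e"
    using assms unfolding GWNC_def by blast
  moreover have "nilpotent_r (q - 2 * e)"
    using nilpotent_r_if_diff_in_nil_radical[OF UU _ qe(1)]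
      nil_radical_uminus[OF two_mult_in_nil_radical[OF UU]] by simp
  moreover have "q - e = e + (q - 2 * e)" by (simp add: algebra_simps mult_2)
  ultimately show ?thesis using that by (metis add.commute)
qed

lemma nilpotent_diff_square_if_nil_clean:
  assumes UU: "UU_ring TYPE('a::ring_1)" and e: "idempotent_r e" and q: "nilpotent_r (q :: 'a)"
  shows "nilpotent_r ((e + q) - (e + q) * (e + q))"
proof -
  have "(e + q) - (e + q) * (e + q) - (q - q * q) = - ((e * q - q * e) + 2 * (q * e))"
    using e unfolding idempotent_r_def by (simp add: algebra_simps mult_2)
  also have "\<dots> \<in> nil_radical"
    using nil_radical_uminus nil_radical_add[OF UU] two_mult_in_nil_radical[OF UU]
      idempotent_commutator_in_nil_radical[OF UU e] by blast
  finally have "(e + q) - (e + q) * (e + q) - (q - q * q) \<in> nil_radical" .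
  moreover have "nilpotent_r (q - q * q)"
    using nilpotent_r_mult_commuting[OF _ q, of "1 - q"] by (simp add: algebra_simps)
  ultimately show ?thesis using nilpotent_r_if_diff_in_nil_radical[OF UU] by blast
qed

definition bicommutant :: "'a::ring_1 \<Rightarrow> 'a set" where
  "bicommutant a = {y. \<forall>z. z * a = a * z \<longrightarrow> z * y = y * z}"

lemma self_in_bicommutant: "a \<in> bicommutant a"
  unfolding bicommutant_def by simp

lemma bicommutant_commute:
  assumes "x \<in> bicommutant a" "y \<in> bicommutant a"
  shows "x * y = y * x"
proof -
  have "x * a = a * x" using assms(1) unfolding bicommutant_def by auto
  then show ?thesis using assms(2) unfolding bicommutant_def by blast
qed

lemma zero_in_bicommutant: "0 \<in> bicommutant a"
  unfolding bicommutant_def by simp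

lemma one_in_bicommutant: "1 \<in> bicommutant a"
  unfolding bicommutant_def by simp

lemma numeral_in_bicommutant: "numeral n \<in> bicommutant (a :: 'a::ring_1)"
proof -
  have "z * of_nat (numeral n) = of_nat (numeral n) * z" for z :: 'a
    by (rule mult_of_nat_commute[symmetric])
  then show ?thesis unfolding bicommutant_def by simp
qed

lemma bicommutant_add: "x \<in> bicommutant a \<Longrightarrow> y \<in> bicommutant a \<Longrightarrow> x + y \<in> bicommutant a"
  unfolding bicommutant_def by (simp add: distrib_left distrib_right)

lemma bicommutant_diff: "x \<in> bicommutant a \<Longrightarrow> y \<in> bicommutant a \<Longrightarrow> x - y \<in> bicommutant a"
  unfolding bicommutant_def by (simp add: right_diff_distrib left_diff_distrib)

lemma bicommutant_mult:
  assumes "x \<in> bicommutant a" "y \<in> bicommutant a"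
  shows "x * y \<in> bicommutant a"
  unfolding bicommutant_def
proof (intro CollectI allI impI)
  fix z
  assume "z * a = a * z"
  then have "z * x = x * z" "z * y = y * z" using assms unfolding bicommutant_def by blast+
  then show "z * (x * y) = x * y * z" by (metis mult.assoc)
qed

lemma bicommutant_power: "x \<in> bicommutant a \<Longrightarrow> x ^ n \<in> bicommutant a"
  by (induction n) (simp_all add: one_in_bicommutant bicommutant_mult)

lemmas bicommutant_intros =
  self_in_bicommutant zero_in_bicommutant one_in_bicommutant numeral_in_bicommutant
  bicommutant_add bicommutant_diff bicommutant_mult bicommutant_power

text \<open>Without commutativity, ring normalisation cannot merge \<open>2 * x + x\<close> into \<open>3 * x\<close>;
  expanding numeral coefficients into sums lets it decide identities in one variable.\<close>

lemma numeral_Bit0_mult: "numeral (Num.Bit0 n) * y = numeral n * y + numeral n * (y :: 'a::ring_1)"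
  by (simp only: numeral_Bit0 distrib_right)

lemma numeral_Bit1_mult: "numeral (Num.Bit1 n) * y = numeral n * y + numeral n * y + (y :: 'a::ring_1)"
  by (simp only: numeral_Bit1 distrib_right mult_1_left)

lemma mult_numeral_Bit0: "y * numeral (Num.Bit0 n) = y * numeral n + (y :: 'a::ring_1) * numeral n"
  by (simp only: numeral_Bit0 distrib_left)

lemma mult_numeral_Bit1: "y * numeral (Num.Bit1 n) = y * numeral n + y * numeral n + (y :: 'a::ring_1)"
  by (simp only: numeral_Bit1 distrib_left mult_1_right)

lemmas numeral_mult_expand = numeral_Bit0_mult numeral_Bit1_mult mult_numeral_Bit0 mult_numeral_Bit1

definition newton_idem :: "'a::ring_1 \<Rightarrow> 'a" where
  "newton_idem x = 3 * x ^ 2 - 2 * x ^ 3"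

lemma newton_idem_defect:
  "newton_idem x - newton_idem x * newton_idem x = (x - x * x) ^ 2 * (3 + 4 * (x - x * x))"
  unfolding newton_idem_def
  by (simp add: algebra_simps power2_eq_square power3_eq_cube numeral_mult_expand)

lemma newton_idem_diff: "newton_idem x - x = (x - x * x) * (2 * x - 1)"
  unfolding newton_idem_def
  by (simp add: algebra_simps power2_eq_square power3_eq_cube numeral_mult_expand)

lemma newton_idem_in_bicommutant: "x \<in> bicommutant a \<Longrightarrow> newton_idem x \<in> bicommutant a"
  unfolding newton_idem_def by (intro bicommutant_intros)

lemma newton_idem_step:
  assumes x: "x \<in> bicommutant a" and T: "T \<in> bicommutant a" and c: "c \<in> bicommutant a"
    and defect: "x - x * x = T * c"
  shows "\<exists>c' \<in> bicommutant a. newton_idem x - newton_idem x * newton_idem x = T * T * c'"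
    and "\<exists>d \<in> bicommutant a. newton_idem x - x = T * d"
proof -
  have "(x - x * x) ^ 2 = T * (c * T) * c" by (simp add: defect power2_eq_square mult.assoc)
  also have "\<dots> = T * T * (c * c)" by (simp add: bicommutant_commute[OF c T] mult.assoc)
  finally have square: "(x - x * x) ^ 2 = T * T * (c * c)" .
  show "\<exists>c' \<in> bicommutant a. newton_idem x - newton_idem x * newton_idem x = T * T * c'"
  proof
    show "newton_idem x - newton_idem x * newton_idem x = T * T * (c * c * (3 + 4 * (x - x * x)))"
      by (simp only: newton_idem_defect square mult.assoc)
    show "c * c * (3 + 4 * (x - x * x)) \<in> bicommutant a" using x c by (intro bicommutant_intros)
  qed
  show "\<exists>d \<in> bicommutant a. newton_idem x - x = T * d"
  proof
    show "newton_idem x - x = T * (c * (2 * x - 1))" by (simp only: newton_idem_diff defect mult.assoc)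
    show "c * (2 * x - 1) \<in> bicommutant a" using x c by (intro bicommutant_intros)
  qed
qed

text \<open>The defect of the k-th iterate is in fact divisible by \<open>t ^ 2 ^ k\<close>; divisibility
  by \<open>t ^ Suc k\<close> is all we need, since \<open>t\<close> is nilpotent.\<close>

lemma newton_idem_iterate:
  fixes a :: "'a::ring_1"
  defines "t \<equiv> a - a * a"
  shows "(newton_idem ^^ k) a \<in> bicommutant a
    \<and> (\<exists>c \<in> bicommutant a. (newton_idem ^^ k) a - (newton_idem ^^ k) a * (newton_idem ^^ k) a
         = t ^ Suc k * c)
    \<and> (\<exists>d \<in> bicommutant a. (newton_idem ^^ k) a - a = t * d)"
proof (induction k)
  case 0
  have "a - a * a = t ^ Suc 0 * 1" "a - a = t * 0" unfolding t_def by simp_all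
  then show ?case using self_in_bicommutant one_in_bicommutant zero_in_bicommutant
    by (simp only: funpow_0) blast
next
  case (Suc k)
  define x where "x = (newton_idem ^^ k) a"
  have t: "t \<in> bicommutant a" unfolding t_def by (intro bicommutant_intros)
  from Suc obtain c d where x: "x \<in> bicommutant a" and c: "c \<in> bicommutant a"
    and d: "d \<in> bicommutant a" and "x - x * x = t ^ Suc k * c" and "x - a = t * d"
    unfolding x_def by blast
  with newton_idem_step[of x a "t ^ Suc k" c] t obtain c' d'
    where c': "c' \<in> bicommutant a" and d': "d' \<in> bicommutant a"
      and defect: "newton_idem x - newton_idem x * newton_idem x = t ^ Suc k * t ^ Suc k * c'"
      and step: "newton_idem x - x = t ^ Suc k * d'"
    using bicommutant_power by blast
  have "t ^ Suc k * t ^ Suc k = t ^ Suc (Suc k) * t ^ k"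
    by (simp only: power_add[symmetric] add_Suc add_Suc_right)
  with defect have "newton_idem x - newton_idem x * newton_idem x = t ^ Suc (Suc k) * (t ^ k * c')"
    by (simp only: mult.assoc)
  moreover have "newton_idem x - a = t * (t ^ k * d' + d)"
  proof -
    have "newton_idem x - a = (newton_idem x - x) + (x - a)" by simp
    also have "\<dots> = t * (t ^ k * d') + t * d" using step \<open>x - a = t * d\<close> by (simp add: mult.assoc)
    finally show ?thesis by (simp only: distrib_left)
  qed
  moreover have "t ^ k * c' \<in> bicommutant a" "t ^ k * d' + d \<in> bicommutant a"
    using t c' d' d by (auto intro: bicommutant_intros)
  moreover have "(newton_idem ^^ Suc k) a = newton_idem x" unfolding x_def by simp
  ultimately show ?case using newton_idem_in_bicommutant[OF x] by auto
qed

lemma strongly_nil_clean_decomp_if_nilpotent_diff_square: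
  fixes a :: "'a::ring_1"
  assumes "nilpotent_r (a - a * a)"
  shows "\<exists>e b. idempotent_r e \<and> nilpotent_r b \<and> a = e + b \<and> e * b = b * e"
proof -
  define t where "t = a - a * a"
  obtain m where "t ^ m = 0" using assms unfolding nilpotent_r_def t_def by blast
  define e where "e = (newton_idem ^^ m) a"
  obtain c d where e: "e \<in> bicommutant a" and d: "d \<in> bicommutant a"
    and "e - e * e = t ^ Suc m * c" and "e - a = t * d"
    using newton_idem_iterate[of m a] unfolding e_def t_def by blast
  have "idempotent_r e"
    using \<open>e - e * e = _\<close> \<open>t ^ m = 0\<close> unfolding idempotent_r_def by (simp add: power_Suc2)
  have t: "t \<in> bicommutant a" unfolding t_def by (intro bicommutant_intros)
  have "nilpotent_r (t * d)"
    using nilpotent_r_mult_commuting bicommutant_commute[OF t d] assms t_def by blast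
  moreover have "a - e = - (t * d)" by (simp flip: \<open>e - a = t * d\<close>)
  ultimately have "nilpotent_r (a - e)" using nilpotent_r_uminus by simp
  moreover have "e * (a - e) = (a - e) * e"
    using bicommutant_commute e by (blast intro: bicommutant_intros)
  ultimately show ?thesis using \<open>idempotent_r e\<close> by force
qed

theorem lemma2p30:
  shows "strongly_nil_clean TYPE('a::ring_1) \<longleftrightarrow>
         (GWNC TYPE('a) \<and> UU_ring TYPE('a))"
proof
  assume "strongly_nil_clean TYPE('a)"
  then show "GWNC TYPE('a) \<and> UU_ring TYPE('a)"
    using GWNC_if_strongly_nil_clean UU_ring_if_strongly_nil_clean by blast
next
  assume "GWNC TYPE('a) \<and> UU_ring TYPE('a)"
  then have GWNC: "GWNC TYPE('a)" and UU: "UU_ring TYPE('a)" by simp_all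
  show "strongly_nil_clean TYPE('a)"
    unfolding strongly_nil_clean_def
  proof
    fix a :: 'a
    obtain e q where "idempotent_r e" "nilpotent_r q" "a = e + q"
      using nil_clean_if_GWNC_UU_ring[OF UU GWNC] .
    then have "nilpotent_r (a - a * a)" using nilpotent_diff_square_if_nil_clean[OF UU] by blast
    then show "\<exists>e b. idempotent_r e \<and> nilpotent_r b \<and> a = e + b \<and> e * b = b * e"
      by (rule strongly_nil_clean_decomp_if_nilpotent_diff_square)
  qed
qed

end
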